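(* There is a constant $C_5>0$ depending only on $f,h,\tau$ such that for every $\Phi\in\mathcal C$ and every $n\in\mathbb N$, \[ |L^n(\Phi)|_\beta\le|\Phi|_\beta\,\eta^{\beta n}+C_5|\Phi|_\infty . \]
   Context: Let $I=[0,1)$ carry a metric $d_I$, fix $\theta\in(0,1)$, and let $\Omega=I^{\mathbb Z}$ with metric $d(x,y)=\sup_{k\in\mathbb Z}\theta^{|k|}d_I(x_k,y_k)$. Let $\tau:I\to I$ have full branches, so that $b=\#\tau^{-1}(t)$ is constant; let $p_\tau$ be a fixed point of $\tau$. Assume there is $\eta\in(0,1)$ such that every inverse branch $\zeta$ of $\tau$ satisfies $d_I(\zeta(s),\zeta(t))\le\eta\,d_I(s,t)$. Let $(\bar\tau x)_i=\tau(x_i)$. Let $\pi_k:\Omega\to\Omega$ keep the coordinates $|i|\le k$ and set the others to $p_\tau$; $\Phi_k=\Phi\circ\pi_k$. Fix $\beta\in(0,1]$; $|\Phi|_\infty=\sup|\Phi|$, $|\Phi|_\beta=\sup_{k\in\mathbb N}\sup_{x\neq y}|\Phi_k(x)-\Phi_k(y)|/d(x,y)^\beta$, $\|\Phi\|=|\Phi|_\infty+|\Phi|_\beta$, $\mathcal C=\{\Phi\in C(\Omega):\|\Phi\|<\infty\}$. An inverse branch of order $k$ is a choice $\zeta=(\zeta_j)_{|j|\le k}$ of inverse branches of $\tau$, with $(\zeta_x)_j=\zeta_j(x_j)$ for $|j|\le k$, $(\zeta_x)_j=x_j$ otherwise; $b_k=b^{2k+1}$. For real $f\in\mathcal C$,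 $P_k\Phi(x)=b_k^{-1}\sum_{|\zeta|=k}e^{f(\pi_k\zeta_x)}\Phi(\pi_k\zeta_x)$ and $P\Phi=\lim_kP_k\Phi$ pointwise. Fix a Borel probability measure $\nu_0$ with $P^*\nu_0=\lambda\nu_0$, $\lambda=\int P\mathbf 1\,d\nu_0$, and let $h\in\mathcal C$ be the unique strictly positive function with $Ph=\lambda h$, $\nu_0(h)=1$, $h(x)\le \exp\!\big(|f|_\beta\frac{\eta^\beta}{1-\eta^\beta}d(x,y)^\beta\big)h(y)$ for all $x,y$. Define $L\Phi=P(h\Phi)/(\lambda h)$ (so $L\mathbf 1=\mathbf 1$). *)

theory Defs
  imports "HOL-Probability.Probability"
begin

definition Iv :: "real set" where
  "Iv = {0..<1}"

definition Om :: "(int \<Rightarrow> real) set" where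
  "Om = {x. \<forall>i. x i \<in> Iv}"

definition metric_on_I :: "(real \<Rightarrow> real \<Rightarrow> real) \<Rightarrow> bool" where
  "metric_on_I dI \<longleftrightarrow>
     (\<forall>s\<in>Iv. \<forall>t\<in>Iv. 0 \<le> dI s t \<and> (dI s t = 0 \<longleftrightarrow> s = t) \<and> dI s t = dI t s) \<and>
     (\<forall>s\<in>Iv. \<forall>t\<in>Iv. \<forall>u\<in>Iv. dI s u \<le> dI s t + dI t u)"

definition dOm :: "(real \<Rightarrow> real \<Rightarrow> real) \<Rightarrow> real \<Rightarrow> (int \<Rightarrow> real) \<Rightarrow> (int \<Rightarrow> real) \<Rightarrow> real" where
  "dOm dI \<theta> x y = (SUP k::int. \<theta> ^ nat \<bar>k\<bar> * dI (x k) (y k))"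

definition pik :: "real \<Rightarrow> nat \<Rightarrow> (int \<Rightarrow> real) \<Rightarrow> (int \<Rightarrow> real)" where
  "pik p k x = (\<lambda>i. if \<bar>i\<bar> \<le> int k then x i else p)"

definition contOm :: "(real \<Rightarrow> real \<Rightarrow> real) \<Rightarrow> real \<Rightarrow> ((int \<Rightarrow> real) \<Rightarrow> 'b::real_normed_vector) \<Rightarrow> bool" where
  "contOm dI \<theta> \<Phi> \<longleftrightarrow>
     (\<forall>x\<in>Om. \<forall>e>0. \<exists>\<delta>>0. \<forall>y\<in>Om. dOm dI \<theta> x y < \<delta> \<longrightarrow> norm (\<Phi> y - \<Phi> x) < e)"

text \<open>|Phi|_infty (extended-real valued, so that infinity is possible).\<close>
definition supn :: "((int \<Rightarrow> real) \<Rightarrow> 'b::real_normed_vector) \<Rightarrow> ereal" where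
  "supn \<Phi> = (SUP x\<in>Om. ereal (norm (\<Phi> x)))"

definition holder :: "(real \<Rightarrow> real \<Rightarrow> real) \<Rightarrow> real \<Rightarrow> real \<Rightarrow> real \<Rightarrow>
    ((int \<Rightarrow> real) \<Rightarrow> 'b::real_normed_vector) \<Rightarrow> ereal" where
  "holder dI \<theta> p \<beta> \<Phi> =
     (SUP k::nat. SUP xy\<in>{(x, y). x \<in> Om \<and> y \<in> Om \<and> x \<noteq> y}.
        ereal (norm (\<Phi> (pik p k (fst xy)) - \<Phi> (pik p k (snd xy)))
               / dOm dI \<theta> (fst xy) (snd xy) powr \<beta>))"

definition inC :: "(real \<Rightarrow> real \<Rightarrow> real) \<Rightarrow> real \<Rightarrow> real \<Rightarrow> real \<Rightarrow>
    ((int \<Rightarrow> real) \<Rightarrow> 'b::real_normed_vector) \<Rightarrow> bool" where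
  "inC dI \<theta> p \<beta> \<Phi> \<longleftrightarrow>
     contOm dI \<theta> \<Phi> \<and> supn \<Phi> < \<infinity> \<and> holder dI \<theta> p \<beta> \<Phi> < \<infinity>"

text \<open>tau has full branches; Z is the (finite) set of its inverse branches, b = card Z.\<close>
definition full_branches :: "(real \<Rightarrow> real) \<Rightarrow> (real \<Rightarrow> real) set \<Rightarrow> bool" where
  "full_branches \<tau> Z \<longleftrightarrow>
     finite Z \<and> Z \<noteq> {} \<and> (\<forall>t\<in>Iv. \<tau> t \<in> Iv) \<and>
     (\<forall>\<zeta>\<in>Z. \<forall>t\<in>Iv. \<zeta> t \<in> Iv \<and> \<tau> (\<zeta> t) = t) \<and>
     (\<forall>\<zeta>\<in>Z. is_interval (\<zeta> ` Iv)) \<and>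
     (\<forall>t\<in>Iv. \<forall>\<zeta>\<in>Z. \<forall>\<zeta>'\<in>Z. \<zeta> t = \<zeta>' t \<longrightarrow> \<zeta> = \<zeta>') \<and>
     (\<forall>t\<in>Iv. {s\<in>Iv. \<tau> s = t} = (\<lambda>\<zeta>. \<zeta> t) ` Z)"

definition branches :: "(real \<Rightarrow> real) set \<Rightarrow> nat \<Rightarrow> (int \<Rightarrow> real \<Rightarrow> real) set" where
  "branches Z k = PiE {- int k..int k} (\<lambda>_. Z)"

definition pzx :: "real \<Rightarrow> nat \<Rightarrow> (int \<Rightarrow> real \<Rightarrow> real) \<Rightarrow> (int \<Rightarrow> real) \<Rightarrow> (int \<Rightarrow> real)" where
  "pzx p k \<sigma> x = pik p k (\<lambda>i. if \<bar>i\<bar> \<le> int k then \<sigma> i (x i) else x i)"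

definition Pk :: "(real \<Rightarrow> real) set \<Rightarrow> ((int \<Rightarrow> real) \<Rightarrow> real) \<Rightarrow> real \<Rightarrow> nat \<Rightarrow>
    ((int \<Rightarrow> real) \<Rightarrow> 'b::real_normed_vector) \<Rightarrow> (int \<Rightarrow> real) \<Rightarrow> 'b" where
  "Pk Z f p k \<Phi> x =
     (1 / real (card Z ^ (2 * k + 1))) *\<^sub>R
       (\<Sum>\<sigma>\<in>branches Z k. exp (f (pzx p k \<sigma> x)) *\<^sub>R \<Phi> (pzx p k \<sigma> x))"

definition Pop :: "(real \<Rightarrow> real) set \<Rightarrow> ((int \<Rightarrow> real) \<Rightarrow> real) \<Rightarrow> real \<Rightarrow>
    ((int \<Rightarrow> real) \<Rightarrow> 'b::real_normed_vector) \<Rightarrow> (int \<Rightarrow> real) \<Rightarrow> 'b" where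
  "Pop Z f p \<Phi> x = lim (\<lambda>k. Pk Z f p k \<Phi> x)"

definition Lop :: "(real \<Rightarrow> real) set \<Rightarrow> ((int \<Rightarrow> real) \<Rightarrow> real) \<Rightarrow> real \<Rightarrow> real \<Rightarrow>
    ((int \<Rightarrow> real) \<Rightarrow> real) \<Rightarrow> ((int \<Rightarrow> real) \<Rightarrow> 'b::real_normed_vector) \<Rightarrow> (int \<Rightarrow> real) \<Rightarrow> 'b" where
  "Lop Z f p lam h \<Phi> x = (1 / (lam * h x)) *\<^sub>R Pop Z f p (\<lambda>y. h y *\<^sub>R \<Phi> y) x"

definition openOm :: "(real \<Rightarrow> real \<Rightarrow> real) \<Rightarrow> real \<Rightarrow> (int \<Rightarrow> real) set \<Rightarrow> bool" where
  "openOm dI \<theta> U \<longleftrightarrow> U \<subseteq> Om \<and> (\<forall>x\<in>U. \<exists>e>0. \<forall>y\<in>Om. dOm dI \<theta> x y < e \<longrightarrow> y \<in> U)"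

definition borelOm :: "(real \<Rightarrow> real \<Rightarrow> real) \<Rightarrow> real \<Rightarrow> (int \<Rightarrow> real) set set" where
  "borelOm dI \<theta> = sigma_sets Om {U. openOm dI \<theta> U}"

end

theory Submission
  imports Defs
begin

text \<open>
  The truncated operators P_k converge geometrically fast (consecutive terms
  differ by O(theta^(beta k))), so P_k h tends to lam h > 0 and L is the pointwise limit of
  L_k Phi = P_k(h Phi) / P_k h.  Each L_k Phi (u) is an average of Phi over the order-k
  preimages of u with weights exp(f) h.  For two points u, v the preimages are
  eta d(u,v)-close, and the weights are comparable up to exp(O(d(u,v)^beta)) by the Hoelder
  bounds of f and log h; an abstract comparison of weighted averages then gives the one-step
  inequality |L Phi|_beta <= eta^beta |Phi|_beta + CL |Phi|_infty together with
  |L Phi|_infty <= |Phi|_infty.  Iterating with a constant C satisfying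
  eta^beta C + CL <= C yields the theorem.
\<close>

section \<open>Hoelder bounds for the shift space\<close>

text \<open>Pointwise and Hoelder bounds with explicit real constants.  Working with these
  predicates instead of the extended-real norms keeps all estimates in real arithmetic.\<close>

definition bounded_by :: "real \<Rightarrow> ((int \<Rightarrow> real) \<Rightarrow> 'b::real_normed_vector) \<Rightarrow> bool" where
  "bounded_by M \<Phi> \<longleftrightarrow> (\<forall>x\<in>Om. norm (\<Phi> x) \<le> M)"

locale shift_space =
  fixes dI :: "real \<Rightarrow> real \<Rightarrow> real" and \<theta> \<beta> p B :: real
  assumes dI_metric: "metric_on_I dI"
    and dI_le_B: "\<forall>s\<in>Iv. \<forall>t\<in>Iv. dI s t \<le> B"
    and theta_pos: "0 < \<theta>" and theta_lt_1: "\<theta> < 1"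
    and beta_pos: "0 < \<beta>"
    and p_in_I: "p \<in> Iv"
begin

abbreviation d :: "(int \<Rightarrow> real) \<Rightarrow> (int \<Rightarrow> real) \<Rightarrow> real" where
  "d \<equiv> dOm dI \<theta>"

definition hoelder_by :: "real \<Rightarrow> ((int \<Rightarrow> real) \<Rightarrow> 'b::real_normed_vector) \<Rightarrow> bool" where
  "hoelder_by H \<Phi> \<longleftrightarrow>
     (\<forall>k a b. a \<in> Om \<longrightarrow> b \<in> Om \<longrightarrow> norm (\<Phi> (pik p k a) - \<Phi> (pik p k b)) \<le> H * d a b powr \<beta>)"

lemma dI_nonneg: "s \<in> Iv \<Longrightarrow> t \<in> Iv \<Longrightarrow> 0 \<le> dI s t"
  using dI_metric unfolding metric_on_I_def by blast

lemma dI_self: "s \<in> Iv \<Longrightarrow> dI s s = 0"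
  using dI_metric unfolding metric_on_I_def by blast

lemma dI_pos: "s \<in> Iv \<Longrightarrow> t \<in> Iv \<Longrightarrow> s \<noteq> t \<Longrightarrow> 0 < dI s t"
  using dI_metric unfolding metric_on_I_def by (metis order_le_less)

lemma dI_sym: "s \<in> Iv \<Longrightarrow> t \<in> Iv \<Longrightarrow> dI s t = dI t s"
  using dI_metric unfolding metric_on_I_def by blast

lemma B_nonneg: "0 \<le> B"
  using dI_le_B dI_self[OF p_in_I] p_in_I by force

lemma Om_coord: "x \<in> Om \<Longrightarrow> x i \<in> Iv"
  unfolding Om_def by auto

lemma zero_in_Om: "(\<lambda>_. 0) \<in> Om"
  unfolding Om_def Iv_def by auto

lemma half_in_Om: "(\<lambda>_. 1/2) \<in> Om"
  unfolding Om_def Iv_def by auto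

text \<open>Every weighted coordinate distance is at most B, so the supremum defining d exists.\<close>
lemma coord_dist_le_B:
  assumes "x \<in> Om" "y \<in> Om" shows "\<theta> ^ nat \<bar>k\<bar> * dI (x k) (y k) \<le> B"
proof -
  have "\<theta> ^ nat \<bar>k\<bar> \<le> 1" using theta_pos theta_lt_1 by (simp add: power_le_one)
  moreover have "0 \<le> dI (x k) (y k)" "dI (x k) (y k) \<le> B"
    using assms Om_coord dI_nonneg dI_le_B by auto
  ultimately have "\<theta> ^ nat \<bar>k\<bar> * dI (x k) (y k) \<le> 1 * dI (x k) (y k)"
    by (intro mult_right_mono) auto
  thus ?thesis using \<open>dI (x k) (y k) \<le> B\<close> by simp
qed

lemma d_ge_coord: "x \<in> Om \<Longrightarrow> y \<in> Om \<Longrightarrow> \<theta> ^ nat \<bar>i\<bar> * dI (x i) (y i) \<le> d x y"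
  unfolding dOm_def using coord_dist_le_B by (intro cSUP_upper bdd_aboveI) auto

lemma d_le_const: "(\<And>i. \<theta> ^ nat \<bar>i\<bar> * dI (x i) (y i) \<le> c) \<Longrightarrow> d x y \<le> c"
  unfolding dOm_def by (rule cSUP_least) auto

lemma d_nonneg: assumes "x \<in> Om" "y \<in> Om" shows "0 \<le> d x y"
  using d_ge_coord[OF assms, of 0] dI_nonneg[OF Om_coord[OF assms(1)] Om_coord[OF assms(2)], of 0 0]
  by simp

lemma d_le_B: "x \<in> Om \<Longrightarrow> y \<in> Om \<Longrightarrow> d x y \<le> B"
  by (rule d_le_const) (rule coord_dist_le_B)

lemma d_sym: "x \<in> Om \<Longrightarrow> y \<in> Om \<Longrightarrow> d x y = d y x"
  unfolding dOm_def using dI_sym Om_coord by simp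

lemma d_pos: assumes "x \<in> Om" "y \<in> Om" "x \<noteq> y" shows "0 < d x y"
proof -
  obtain i where i: "x i \<noteq> y i" using assms(3) by auto
  have "0 < \<theta> ^ nat \<bar>i\<bar> * dI (x i) (y i)" using i assms Om_coord dI_pos theta_pos by simp
  also have "\<dots> \<le> d x y" by (rule d_ge_coord[OF assms(1,2)])
  finally show ?thesis .
qed

lemma d_powr_le_B: "x \<in> Om \<Longrightarrow> y \<in> Om \<Longrightarrow> d x y powr \<beta> \<le> B powr \<beta>"
  using d_le_B d_nonneg beta_pos by (intro powr_mono2) auto

lemma pik_Om: "x \<in> Om \<Longrightarrow> pik p k x \<in> Om"
  using p_in_I unfolding pik_def Om_def by auto

lemma pik_pik: "k \<le> m \<Longrightarrow> pik p m (pik p k x) = pik p k x"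
  unfolding pik_def by auto

lemma d_pik_le: assumes "x \<in> Om" "y \<in> Om" shows "d (pik p k x) (pik p k y) \<le> d x y"
proof (rule d_le_const)
  fix i show "\<theta> ^ nat \<bar>i\<bar> * dI (pik p k x i) (pik p k y i) \<le> d x y"
    using d_ge_coord[OF assms] dI_self[OF p_in_I] d_nonneg[OF assms] unfolding pik_def by auto
qed

lemma supn_nonneg: "0 \<le> supn \<Phi>"
proof -
  have "ereal (norm (\<Phi> (\<lambda>_. 0))) \<le> supn \<Phi>" unfolding supn_def by (rule SUP_upper[OF zero_in_Om])
  thus ?thesis by (meson ereal_less_eq(5) norm_ge_zero order_trans)
qed

lemma holder_nonneg: "0 \<le> holder dI \<theta> p \<beta> \<Phi>"
proof -
  let ?x = "\<lambda>_::int. 0::real" and ?y = "\<lambda>_::int. 1/2::real"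
  have "ereal (norm (\<Phi> (pik p 0 ?x) - \<Phi> (pik p 0 ?y)) / d ?x ?y powr \<beta>) \<le> holder dI \<theta> p \<beta> \<Phi>"
    unfolding holder_def
    by (rule SUP_upper2[of 0], simp, rule SUP_upper2[of "(?x, ?y)"])
       (use zero_in_Om half_in_Om in \<open>auto simp: fun_eq_iff\<close>)
  thus ?thesis by (meson ereal_less_eq(5) order_trans divide_nonneg_nonneg norm_ge_zero powr_ge_zero)
qed

lemma holder_le:
  assumes "hoelder_by H \<Phi>" shows "holder dI \<theta> p \<beta> \<Phi> \<le> ereal H"
  unfolding holder_def
proof (intro SUP_least, clarsimp)
  fix k a b assume ab: "a \<in> Om" "b \<in> Om" "a \<noteq> b"
  have "0 < d a b powr \<beta>" using d_pos[OF ab] by simp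
  thus "norm (\<Phi> (pik p k a) - \<Phi> (pik p k b)) / d a b powr \<beta> \<le> H"
    using assms ab unfolding hoelder_by_def by (simp add: divide_le_eq)
qed

lemma inC_bounds:
  assumes "inC dI \<theta> p \<beta> \<Phi>"
  obtains M H where "supn \<Phi> = ereal M" "holder dI \<theta> p \<beta> \<Phi> = ereal H"
    "bounded_by M \<Phi>" "hoelder_by H \<Phi>"
proof -
  have fin: "supn \<Phi> < \<infinity>" "holder dI \<theta> p \<beta> \<Phi> < \<infinity>" using assms unfolding inC_def by auto
  obtain M where M: "supn \<Phi> = ereal M"
    using fin(1) supn_nonneg[of \<Phi>] by (cases "supn \<Phi>") auto
  obtain H where H: "holder dI \<theta> p \<beta> \<Phi> = ereal H" "0 \<le> H"
    using fin(2) holder_nonneg[of \<Phi>] by (cases "holder dI \<theta> p \<beta> \<Phi>") auto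
  have "bounded_by M \<Phi>"
    unfolding bounded_by_def supn_def[symmetric] using M(1) supn_def
    by (metis SUP_upper ereal_less_eq(3))
  moreover have "hoelder_by H \<Phi>"
    unfolding hoelder_by_def
  proof (intro allI impI)
    fix k a b assume ab: "a \<in> Om" "b \<in> Om"
    show "norm (\<Phi> (pik p k a) - \<Phi> (pik p k b)) \<le> H * d a b powr \<beta>"
    proof (cases "a = b")
      case False
      have "ereal (norm (\<Phi> (pik p k a) - \<Phi> (pik p k b)) / d a b powr \<beta>) \<le> holder dI \<theta> p \<beta> \<Phi>"
        unfolding holder_def
        by (rule SUP_upper2[of k], simp, rule SUP_upper2[of "(a, b)"]) (use ab False in auto)
      thus ?thesis using H(1) d_pos[OF ab False] by (simp add: divide_le_eq mult.commute)
    qed (simp add: H(2))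
  qed
  ultimately show ?thesis using that M H(1) by blast
qed

text \<open>Constants of bounds are automatically nonnegative, since Om contains distinct points.\<close>
lemma bounded_by_nonneg: "bounded_by M \<Phi> \<Longrightarrow> 0 \<le> M"
  unfolding bounded_by_def using zero_in_Om norm_ge_zero order_trans by blast

lemma hoelder_by_nonneg: assumes "hoelder_by H \<Phi>" shows "0 \<le> H"
proof -
  let ?x = "\<lambda>_::int. 0::real" and ?y = "\<lambda>_::int. 1/2::real"
  have "0 < d ?x ?y powr \<beta>" using d_pos[OF zero_in_Om half_in_Om] by (simp add: fun_eq_iff)
  moreover have "0 \<le> H * d ?x ?y powr \<beta>"
    using assms zero_in_Om half_in_Om unfolding hoelder_by_def by (meson norm_ge_zero order_trans)
  ultimately show ?thesis by (simp add: zero_le_mult_iff)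
qed

lemma hoelder_by_mono: "hoelder_by H \<Phi> \<Longrightarrow> H \<le> H' \<Longrightarrow> hoelder_by H' \<Phi>"
  unfolding hoelder_by_def by (meson mult_right_mono order_trans powr_ge_zero)

lemma hoelder_by_scaleR:
  fixes g :: "(int \<Rightarrow> real) \<Rightarrow> real" and \<psi> :: "(int \<Rightarrow> real) \<Rightarrow> 'b::real_normed_vector"
  assumes g: "bounded_by Mg g" "hoelder_by Hg g" and \<psi>: "bounded_by M \<psi>" "hoelder_by H \<psi>"
  shows "hoelder_by (Mg * H + Hg * M) (\<lambda>x. g x *\<^sub>R \<psi> x)"
  unfolding hoelder_by_def
proof (intro allI impI)
  fix k a b assume ab: "a \<in> Om" "b \<in> Om"
  let ?a = "pik p k a" and ?b = "pik p k b"
  have Om: "?a \<in> Om" "?b \<in> Om" using pik_Om ab by auto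
  have "g ?a *\<^sub>R \<psi> ?a - g ?b *\<^sub>R \<psi> ?b = g ?a *\<^sub>R (\<psi> ?a - \<psi> ?b) + (g ?a - g ?b) *\<^sub>R \<psi> ?b"
    by (simp add: algebra_simps)
  hence "norm (g ?a *\<^sub>R \<psi> ?a - g ?b *\<^sub>R \<psi> ?b) \<le> \<bar>g ?a\<bar> * norm (\<psi> ?a - \<psi> ?b) + \<bar>g ?a - g ?b\<bar> * norm (\<psi> ?b)"
    by (metis norm_scaleR norm_triangle_ineq)
  also have "\<dots> \<le> Mg * (H * d a b powr \<beta>) + (Hg * d a b powr \<beta>) * M"
    using g \<psi> Om ab bounded_by_nonneg[OF g(1)] bounded_by_nonneg[OF \<psi>(1)] hoelder_by_nonneg[OF g(2)]
    unfolding bounded_by_def hoelder_by_def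
    by (intro add_mono mult_mono) (auto intro: order_trans[OF abs_ge_zero])
  finally show "norm (g ?a *\<^sub>R \<psi> ?a - g ?b *\<^sub>R \<psi> ?b) \<le> (Mg * H + Hg * M) * d a b powr \<beta>"
    by (simp add: algebra_simps)
qed

lemma bounded_by_scaleR:
  fixes g :: "(int \<Rightarrow> real) \<Rightarrow> real" and \<psi> :: "(int \<Rightarrow> real) \<Rightarrow> 'b::real_normed_vector"
  assumes "bounded_by Mg g" "bounded_by M \<psi>"
  shows "bounded_by (Mg * M) (\<lambda>x. g x *\<^sub>R \<psi> x)"
  using assms bounded_by_nonneg[OF assms(1)] unfolding bounded_by_def by (auto intro!: mult_mono)

end

section \<open>Inverse branches and convergence of the truncated operators\<close>

locale inverse_branches = shift_space +
  fixes Z :: "(real \<Rightarrow> real) set" and \<eta> :: real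
  assumes Z_finite: "finite Z" and Z_nonempty: "Z \<noteq> {}"
    and Z_maps_I: "\<forall>\<zeta>\<in>Z. \<forall>t\<in>Iv. \<zeta> t \<in> Iv"
    and Z_contracts: "\<forall>\<zeta>\<in>Z. \<forall>s\<in>Iv. \<forall>t\<in>Iv. dI (\<zeta> s) (\<zeta> t) \<le> \<eta> * dI s t"
    and eta_pos: "0 < \<eta>" and eta_lt_1: "\<eta> < 1"
begin

lemma branch_in_Z: "\<sigma> \<in> branches Z m \<Longrightarrow> \<bar>i\<bar> \<le> int m \<Longrightarrow> \<sigma> i \<in> Z"
  unfolding branches_def by (auto simp: PiE_iff abs_le_iff)

lemma pzx_Om: assumes "\<sigma> \<in> branches Z m" "k \<le> m" "x \<in> Om" shows "pzx p k \<sigma> x \<in> Om"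
  using assms p_in_I Z_maps_I branch_in_Z[OF assms(1)] unfolding pzx_def pik_def Om_def by auto

lemma pik_pzx: "k \<le> m \<Longrightarrow> pik p m (pzx p k \<sigma> x) = pzx p k \<sigma> x"
  unfolding pzx_def by (rule pik_pik)

lemma pzx_restrict: "pzx p k (restrict \<sigma> {- int k..int k}) u = pzx p k \<sigma> u"
  unfolding pzx_def pik_def by (auto simp: fun_eq_iff)

lemma branches_finite: "finite (branches Z k)"
  unfolding branches_def using Z_finite by (intro finite_PiE) auto

lemma branches_nonempty: "branches Z k \<noteq> {}"
  unfolding branches_def using Z_nonempty by (simp add: PiE_eq_empty_iff)

lemma card_branches: "card (branches Z k) = card Z ^ (2*k+1)"
proof -
  have "card {- int k..int k} = 2*k+1" by simp
  thus ?thesis unfolding branches_def by (simp add: card_PiE)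
qed

lemma card_Z_pos: "0 < card Z"
  using Z_finite Z_nonempty by (simp add: card_gt_0_iff)

lemma d_pzx_le: assumes "\<sigma> \<in> branches Z k" "x \<in> Om" "y \<in> Om"
  shows "d (pzx p k \<sigma> x) (pzx p k \<sigma> y) \<le> \<eta> * d x y"
proof (rule d_le_const)
  fix i
  show "\<theta> ^ nat \<bar>i\<bar> * dI (pzx p k \<sigma> x i) (pzx p k \<sigma> y i) \<le> \<eta> * d x y"
  proof (cases "\<bar>i\<bar> \<le> int k")
    case True
    have "dI (\<sigma> i (x i)) (\<sigma> i (y i)) \<le> \<eta> * dI (x i) (y i)"
      using Z_contracts branch_in_Z[OF assms(1) True] Om_coord assms by blast
    hence "\<theta> ^ nat \<bar>i\<bar> * dI (\<sigma> i (x i)) (\<sigma> i (y i)) \<le> \<eta> * (\<theta> ^ nat \<bar>i\<bar> * dI (x i) (y i))"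
      using theta_pos by (simp add: mult_left_mono mult.left_commute)
    also have "\<dots> \<le> \<eta> * d x y" using d_ge_coord[OF assms(2,3)] eta_pos by simp
    finally show ?thesis using True unfolding pzx_def pik_def by simp
  next
    case False
    thus ?thesis using dI_self[OF p_in_I] d_nonneg[OF assms(2,3)] eta_pos unfolding pzx_def pik_def by simp
  qed
qed

text \<open>Passing from order k to order k+1 moves a point by at most theta^(k+1) B, since only
  coordinates with |i| > k change.\<close>
lemma d_pzx_Suc_le: assumes "\<sigma> \<in> branches Z (Suc k)" "u \<in> Om"
  shows "d (pzx p (Suc k) \<sigma> u) (pzx p k \<sigma> u) \<le> \<theta> ^ Suc k * B"
proof (rule d_le_const)
  fix i
  show "\<theta> ^ nat \<bar>i\<bar> * dI (pzx p (Suc k) \<sigma> u i) (pzx p k \<sigma> u i) \<le> \<theta> ^ Suc k * B"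
  proof (cases "\<bar>i\<bar> \<le> int k")
    case True
    have "\<sigma> i (u i) \<in> Iv" using Z_maps_I branch_in_Z[OF assms(1)] True Om_coord[OF assms(2)] by auto
    thus ?thesis using True dI_self B_nonneg theta_pos unfolding pzx_def pik_def by simp
  next
    case False
    have le: "\<theta> ^ nat \<bar>i\<bar> \<le> \<theta> ^ Suc k"
      using False theta_pos theta_lt_1 by (intro power_decreasing) auto
    have "pzx p (Suc k) \<sigma> u \<in> Om" "pzx p k \<sigma> u \<in> Om" using pzx_Om assms by auto
    hence "0 \<le> dI (pzx p (Suc k) \<sigma> u i) (pzx p k \<sigma> u i)" "dI (pzx p (Suc k) \<sigma> u i) (pzx p k \<sigma> u i) \<le> B"
      using Om_coord dI_nonneg dI_le_B by auto
    thus ?thesis using le theta_pos by (meson mult_mono zero_le_power less_imp_le order_trans B_nonneg)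
  qed
qed

lemma extensions_eq: assumes "y \<in> branches Z k"
  shows "{x \<in> branches Z (Suc k). restrict x {- int k..int k} = y}
       = PiE {- int (Suc k)..int (Suc k)} (\<lambda>i. if i \<in> {- int k..int k} then {y i} else Z)"
  (is "?L = ?R")
proof
  show "?L \<subseteq> ?R"
  proof
    fix x assume "x \<in> ?L"
    hence x: "x \<in> PiE {- int (Suc k)..int (Suc k)} (\<lambda>_. Z)" "restrict x {- int k..int k} = y"
      unfolding branches_def by auto
    show "x \<in> ?R"
    proof (rule PiE_I)
      fix i assume "i \<in> {- int (Suc k)..int (Suc k)}"
      thus "x i \<in> (if i \<in> {- int k..int k} then {y i} else Z)"
        using x by (metis PiE_mem restrict_apply' singletonI)
    qed (use x in auto)
  qed
  show "?R \<subseteq> ?L"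
  proof
    fix x assume x: "x \<in> ?R"
    have y: "y \<in> PiE {- int k..int k} (\<lambda>_. Z)" using assms unfolding branches_def .
    have "x \<in> PiE {- int (Suc k)..int (Suc k)} (\<lambda>_. Z)"
    proof (rule PiE_I)
      fix i assume i: "i \<in> {- int (Suc k)..int (Suc k)}"
      show "x i \<in> Z" using PiE_mem[OF x i] PiE_mem[OF y] by (cases "i \<in> {- int k..int k}") auto
    qed (use x in auto)
    moreover have "restrict x {- int k..int k} = y"
    proof
      fix i show "restrict x {- int k..int k} i = y i"
        using y PiE_mem[OF x, of i] by (cases "i \<in> {- int k..int k}") auto
    qed
    ultimately show "x \<in> ?L" unfolding branches_def by auto
  qed
qed

lemma card_extensions: assumes "y \<in> branches Z k"
  shows "card {x \<in> branches Z (Suc k). restrict x {- int k..int k} = y} = card Z ^ 2"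
proof -
  let ?S = "{- int k..int k}" and ?S' = "{- int (Suc k)..int (Suc k)}"
  have "card {x \<in> branches Z (Suc k). restrict x ?S = y}
      = (\<Prod>i\<in>?S'. if i \<in> ?S then 1 else card Z)"
    unfolding extensions_eq[OF assms] card_PiE[OF finite_atLeastAtMost_int] by (intro prod.cong) auto
  also have "\<dots> = (\<Prod>i\<in>?S' \<inter> - {i. i \<in> ?S}. card Z)"
    by (subst prod.If_cases) auto
  also have "?S' \<inter> - {i. i \<in> ?S} = {- int (Suc k), int (Suc k)}" by auto
  also have "(\<Prod>i\<in>{- int (Suc k), int (Suc k)}. card Z) = card Z ^ 2" by (simp add: power2_eq_square)
  finally show ?thesis .
qed

lemma sum_branches_Suc:
  fixes F :: "(int \<Rightarrow> real) \<Rightarrow> 'b::real_normed_vector"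
  shows "(\<Sum>\<sigma>\<in>branches Z (Suc k). F (pzx p k \<sigma> u))
       = real (card Z ^ 2) *\<^sub>R (\<Sum>\<sigma>\<in>branches Z k. F (pzx p k \<sigma> u))"
proof -
  let ?S = "{- int k..int k}"
  have img: "(\<lambda>\<sigma>. restrict \<sigma> ?S) ` branches Z (Suc k) \<subseteq> branches Z k"
    unfolding branches_def by (auto simp: restrict_PiE_iff PiE_iff)
  have "(\<Sum>\<sigma>\<in>branches Z (Suc k). F (pzx p k \<sigma> u))
     = (\<Sum>y\<in>branches Z k. \<Sum>\<sigma>\<in>{x \<in> branches Z (Suc k). restrict x ?S = y}. F (pzx p k \<sigma> u))"
    by (rule sum.group[symmetric, OF branches_finite branches_finite img])
  also have "\<dots> = (\<Sum>y\<in>branches Z k. \<Sum>\<sigma>\<in>{x \<in> branches Z (Suc k). restrict x ?S = y}. F (pzx p k y u))"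
    by (intro sum.cong refl) (metis (mono_tags, lifting) mem_Collect_eq pzx_restrict)
  also have "\<dots> = (\<Sum>y\<in>branches Z k. real (card Z ^ 2) *\<^sub>R F (pzx p k y u))"
    by (intro sum.cong refl) (simp only: sum_constant_scaleR card_extensions)
  finally show ?thesis by (simp add: scaleR_sum_right)
qed

lemma Pk_Suc_diff:
  fixes \<psi> :: "(int \<Rightarrow> real) \<Rightarrow> 'b::real_normed_vector"
  assumes C: "hoelder_by C (\<lambda>x. exp (f x) *\<^sub>R \<psi> x)" and u: "u \<in> Om"
  shows "norm (Pk Z f p (Suc k) \<psi> u - Pk Z f p k \<psi> u) \<le> C * B powr \<beta> * (\<theta> powr \<beta>) ^ Suc k"
proof -
  let ?F = "\<lambda>x. exp (f x) *\<^sub>R \<psi> x" and ?A = "branches Z (Suc k)"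
  let ?n = "real (card Z ^ (2 * Suc k + 1))"
  have n_pos: "0 < ?n" using card_Z_pos by simp
  have "Pk Z f p k \<psi> u = (1 / ?n) *\<^sub>R (\<Sum>\<sigma>\<in>?A. ?F (pzx p k \<sigma> u))"
    unfolding Pk_def sum_branches_Suc[of ?F] using card_Z_pos
    by (simp add: power_add power2_eq_square field_simps)
  hence "Pk Z f p (Suc k) \<psi> u - Pk Z f p k \<psi> u
     = (1 / ?n) *\<^sub>R (\<Sum>\<sigma>\<in>?A. ?F (pzx p (Suc k) \<sigma> u) - ?F (pzx p k \<sigma> u))"
    unfolding Pk_def by (simp add: sum_subtractf scaleR_diff_right)
  hence "norm (Pk Z f p (Suc k) \<psi> u - Pk Z f p k \<psi> u)
      = (1 / ?n) * norm (\<Sum>\<sigma>\<in>?A. ?F (pzx p (Suc k) \<sigma> u) - ?F (pzx p k \<sigma> u))"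
    using n_pos by simp
  also have "\<dots> \<le> (1 / ?n) * (\<Sum>\<sigma>\<in>?A. C * B powr \<beta> * (\<theta> powr \<beta>) ^ Suc k)"
  proof (intro mult_left_mono order.trans[OF norm_sum] sum_mono)
    fix \<sigma> assume s: "\<sigma> \<in> ?A"
    let ?a1 = "pzx p (Suc k) \<sigma> u" and ?a2 = "pzx p k \<sigma> u"
    have Om: "?a1 \<in> Om" "?a2 \<in> Om" using pzx_Om[OF s _ u] by auto
    have "norm (?F ?a1 - ?F ?a2) = norm (?F (pik p (Suc k) ?a1) - ?F (pik p (Suc k) ?a2))"
      by (simp add: pik_pzx)
    also have "\<dots> \<le> C * d ?a1 ?a2 powr \<beta>" using C Om unfolding hoelder_by_def by blast
    also have "\<dots> \<le> C * (\<theta> ^ Suc k * B) powr \<beta>"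
      using d_pzx_Suc_le[OF s u] d_nonneg[OF Om] beta_pos hoelder_by_nonneg[OF C]
      by (intro mult_left_mono powr_mono2) auto
    also have "\<dots> = C * B powr \<beta> * (\<theta> powr \<beta>) ^ Suc k"
      using B_nonneg theta_pos by (simp add: powr_mult powr_realpow[symmetric] powr_powr mult.commute)
    finally show "norm (?F ?a1 - ?F ?a2) \<le> C * B powr \<beta> * (\<theta> powr \<beta>) ^ Suc k" .
  qed simp
  also have "\<dots> = C * B powr \<beta> * (\<theta> powr \<beta>) ^ Suc k"
    using n_pos card_Z_pos by (simp add: card_branches)
  finally show ?thesis .
qed

text \<open>Hence P_k Psi (u) is a Cauchy sequence with geometrically decaying increments, and
  its limit is P Psi (u).\<close>
lemma Pk_tendsto_Pop:
  fixes \<psi> :: "(int \<Rightarrow> real) \<Rightarrow> 'b::banach"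
  assumes C: "hoelder_by C (\<lambda>x. exp (f x) *\<^sub>R \<psi> x)" and u: "u \<in> Om"
  shows "(\<lambda>k. Pk Z f p k \<psi> u) \<longlonglongrightarrow> Pop Z f p \<psi> u"
proof -
  let ?T = "\<lambda>k. Pk Z f p k \<psi> u"
  have q: "0 \<le> \<theta> powr \<beta>" "\<theta> powr \<beta> < 1"
    using theta_pos theta_lt_1 beta_pos powr_less_mono2[of \<beta> \<theta> 1] by auto
  have geom: "summable (\<lambda>k. C * B powr \<beta> * (\<theta> powr \<beta>) ^ Suc k)"
    using q by (intro summable_mult summable_Suc_iff[THEN iffD2] summable_geometric) auto
  have "summable (\<lambda>k. norm (?T (Suc k) - ?T k))"
    by (rule summable_comparison_test[OF _ geom]) (use Pk_Suc_diff[OF C u] in auto)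
  hence "(\<lambda>n. \<Sum>k<n. ?T (Suc k) - ?T k) \<longlonglongrightarrow> (\<Sum>k. ?T (Suc k) - ?T k)"
    by (rule summable_LIMSEQ[OF summable_norm_cancel])
  moreover have "\<And>n. (\<Sum>k<n. ?T (Suc k) - ?T k) = ?T n - ?T 0"
    by (rule sum_lessThan_telescope)
  ultimately have "(\<lambda>n. ?T n - ?T 0) \<longlonglongrightarrow> (\<Sum>k. ?T (Suc k) - ?T k)"
    by simp
  hence "(\<lambda>n. (?T n - ?T 0) + ?T 0) \<longlonglongrightarrow> (\<Sum>k. ?T (Suc k) - ?T k) + ?T 0"
    by (intro tendsto_add tendsto_const)
  hence "convergent ?T"
    unfolding convergent_def by (intro exI) simp
  thus ?thesis unfolding Pop_def by (simp add: convergent_LIMSEQ_iff)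
qed

end

lemma exp_lipschitz:
  fixes x y c :: real assumes "x \<le> c" "y \<le> c"
  shows "\<bar>exp x - exp y\<bar> \<le> exp c * \<bar>x - y\<bar>"
proof -
  have one_sided: "exp b - exp a \<le> exp c * (b - a)" if "a \<le> b" "b \<le> c" for a b :: real
  proof -
    have "exp b * (1 + (a - b)) \<le> exp b * exp (a - b)" by simp
    hence "exp b - exp a \<le> exp b * (b - a)" by (simp add: exp_diff algebra_simps)
    also have "\<dots> \<le> exp c * (b - a)" using that by (intro mult_right_mono) auto
    finally show ?thesis .
  qed
  show ?thesis
    using one_sided[of x y] one_sided[of y x] assms by (cases "x \<le> y") (auto simp: abs_if)
qed

lemma normalized_weight_le:
  fixes c1 c2 :: "'i \<Rightarrow> real"
  assumes "finite A" "i \<in> A"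
    and pos: "\<And>j. j \<in> A \<Longrightarrow> 0 < c1 j" "\<And>j. j \<in> A \<Longrightarrow> 0 < c2 j"
    and ratio: "\<And>j. j \<in> A \<Longrightarrow> c1 j \<le> exp Q * c2 j" "\<And>j. j \<in> A \<Longrightarrow> c2 j \<le> exp Q * c1 j"
  shows "c1 i / sum c1 A \<le> exp (2 * Q) * (c2 i / sum c2 A)"
proof -
  have S: "0 < sum c1 A" "0 < sum c2 A"
    using assms(1,2) pos by (metis empty_iff sum_pos)+
  have "sum c2 A \<le> exp Q * sum c1 A"
    unfolding sum_distrib_left by (rule sum_mono) (rule ratio(2))
  hence "c1 i * sum c2 A \<le> (exp Q * c2 i) * (exp Q * sum c1 A)"
    using ratio(1)[OF assms(2)] pos[OF assms(2)] S by (intro mult_mono) auto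
  also have "\<dots> = (exp Q * exp Q) * c2 i * sum c1 A" by (simp only: mult_ac)
  also have "exp Q * exp Q = exp (2 * Q)" by (simp only: mult_2 exp_add)
  finally have "c1 i * sum c2 A \<le> exp (2 * Q) * c2 i * sum c1 A" .
  thus ?thesis using S by (simp add: divide_le_eq le_divide_eq mult.commute mult.left_commute)
qed

lemma weighted_average_diff:
  fixes y1 y2 :: "'i \<Rightarrow> 'b::real_normed_vector" and c1 c2 :: "'i \<Rightarrow> real"
  assumes A: "finite A" and nonempty: "A \<noteq> {}"
    and pos: "\<And>i. i \<in> A \<Longrightarrow> 0 < c1 i" "\<And>i. i \<in> A \<Longrightarrow> 0 < c2 i"
    and ratio: "\<And>i. i \<in> A \<Longrightarrow> c1 i \<le> exp Q * c2 i" "\<And>i. i \<in> A \<Longrightarrow> c2 i \<le> exp Q * c1 i"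
    and yM: "\<And>i. i \<in> A \<Longrightarrow> norm (y2 i) \<le> M"
    and yD: "\<And>i. i \<in> A \<Longrightarrow> norm (y1 i - y2 i) \<le> D" and Q: "0 \<le> Q"
  shows "norm ((1 / sum c1 A) *\<^sub>R (\<Sum>i\<in>A. c1 i *\<^sub>R y1 i) - (1 / sum c2 A) *\<^sub>R (\<Sum>i\<in>A. c2 i *\<^sub>R y2 i))
      \<le> D + 2 * M * (exp (2 * Q) - 1)"
proof -
  define w1 where "w1 i = c1 i / sum c1 A" for i
  define w2 where "w2 i = c2 i / sum c2 A" for i
  have S: "0 < sum c1 A" "0 < sum c2 A" using A nonempty pos by (metis all_not_in_conv sum_pos)+
  have w_nonneg: "0 \<le> w1 i" "0 \<le> w2 i" if "i \<in> A" for i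
    unfolding w1_def w2_def using pos[OF that] S by auto
  have w_sum: "sum w1 A = 1" "sum w2 A = 1"
    unfolding w1_def w2_def using S by (simp_all add: sum_divide_distrib[symmetric])
  have M: "0 \<le> M" using yM nonempty norm_ge_zero order_trans by blast
  have w_close: "\<bar>w1 i - w2 i\<bar> \<le> (exp (2 * Q) - 1) * (w1 i + w2 i)" if i: "i \<in> A" for i
  proof -
    have cross: "w1 i \<le> exp (2 * Q) * w2 i" "w2 i \<le> exp (2 * Q) * w1 i"
      unfolding w1_def w2_def using normalized_weight_le[OF A i] pos ratio by blast+
    have E: "1 \<le> exp (2 * Q)" using Q by simp
    have self: "w1 i \<le> exp (2 * Q) * w1 i" "w2 i \<le> exp (2 * Q) * w2 i"
      using mult_right_mono[OF E w_nonneg(1)[OF i]] mult_right_mono[OF E w_nonneg(2)[OF i]] by simp_all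
    show ?thesis using cross self by (simp add: abs_le_iff algebra_simps)
  qed
  have split_term: "(1 / sum c1 A) *\<^sub>R (c1 i *\<^sub>R y1 i) - (1 / sum c2 A) *\<^sub>R (c2 i *\<^sub>R y2 i)
      = w1 i *\<^sub>R (y1 i - y2 i) + (w1 i - w2 i) *\<^sub>R y2 i" for i
    unfolding w1_def w2_def by (simp add: scaleR_diff_right scaleR_diff_left divide_inverse mult.commute)
  have "norm ((1 / sum c1 A) *\<^sub>R (\<Sum>i\<in>A. c1 i *\<^sub>R y1 i) - (1 / sum c2 A) *\<^sub>R (\<Sum>i\<in>A. c2 i *\<^sub>R y2 i))
     = norm ((\<Sum>i\<in>A. w1 i *\<^sub>R (y1 i - y2 i)) + (\<Sum>i\<in>A. (w1 i - w2 i) *\<^sub>R y2 i))"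
    by (simp only: scaleR_sum_right sum_subtractf[symmetric] sum.distrib[symmetric] split_term)
  also have "\<dots> \<le> (\<Sum>i\<in>A. w1 i * D) + (\<Sum>i\<in>A. (exp (2 * Q) - 1) * (w1 i + w2 i) * M)"
  proof (intro order.trans[OF norm_triangle_ineq] add_mono order.trans[OF norm_sum] sum_mono)
    fix i assume i: "i \<in> A"
    show "norm (w1 i *\<^sub>R (y1 i - y2 i)) \<le> w1 i * D"
      using w_nonneg[OF i] yD[OF i] by (simp add: mult_left_mono)
    show "norm ((w1 i - w2 i) *\<^sub>R y2 i) \<le> (exp (2 * Q) - 1) * (w1 i + w2 i) * M"
      using w_close[OF i] yM[OF i] M by (simp add: mult_mono)
  qed
  also have "\<dots> = D + 2 * M * (exp (2 * Q) - 1)"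
    by (simp only: sum_distrib_left[symmetric] sum_distrib_right[symmetric] sum.distrib w_sum) simp
  finally show ?thesis .
qed

section \<open>The normalised transfer operator L\<close>

locale transfer_operator = inverse_branches +
  fixes f h :: "(int \<Rightarrow> real) \<Rightarrow> real" and lam Kh :: real
  assumes f_in_C: "inC dI \<theta> p \<beta> f" and h_in_C: "inC dI \<theta> p \<beta> h"
    and h_pos: "\<forall>x\<in>Om. 0 < h x"
    and h_eigen: "\<forall>x\<in>Om. Pop Z f p h x = lam * h x"
    and h_log_hoelder: "\<forall>x\<in>Om. \<forall>y\<in>Om. h x \<le> exp (Kh * d x y powr \<beta>) * h y"
    and Kh_nonneg: "0 \<le> Kh"
begin

definition Fm :: real where "Fm = real_of_ereal (supn f)"
definition Hf :: real where "Hf = real_of_ereal (holder dI \<theta> p \<beta> f)"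
definition Mh :: real where "Mh = real_of_ereal (supn h)"
definition Hh :: real where "Hh = real_of_ereal (holder dI \<theta> p \<beta> h)"

lemma f_bounds: "bounded_by Fm f" "hoelder_by Hf f"
  using inC_bounds[OF f_in_C] unfolding Fm_def Hf_def by (metis real_of_ereal.simps(1))+

lemma h_bounds: "bounded_by Mh h" "hoelder_by Hh h"
  using inC_bounds[OF h_in_C] unfolding Mh_def Hh_def by (metis real_of_ereal.simps(1))+

text \<open>exp(f) is bounded and Hoelder, since exp is Lipschitz below sup |f|.\<close>
lemma exp_f_bounds: "bounded_by (exp Fm) (\<lambda>x. exp (f x))" "hoelder_by (exp Fm * Hf) (\<lambda>x. exp (f x))"
proof -
  have le: "f x \<le> Fm" if "x \<in> Om" for x
    using f_bounds(1) that unfolding bounded_by_def by (simp add: abs_le_iff)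
  thus "bounded_by (exp Fm) (\<lambda>x. exp (f x))" unfolding bounded_by_def by simp
  show "hoelder_by (exp Fm * Hf) (\<lambda>x. exp (f x))"
    unfolding hoelder_by_def
  proof (intro allI impI)
    fix k a b assume ab: "a \<in> Om" "b \<in> Om"
    have "\<bar>exp (f (pik p k a)) - exp (f (pik p k b))\<bar> \<le> exp Fm * \<bar>f (pik p k a) - f (pik p k b)\<bar>"
      using le pik_Om ab by (intro exp_lipschitz) auto
    also have "\<dots> \<le> exp Fm * (Hf * d a b powr \<beta>)"
      using f_bounds(2) ab unfolding hoelder_by_def by (intro mult_left_mono) auto
    finally show "norm (exp (f (pik p k a)) - exp (f (pik p k b))) \<le> exp Fm * Hf * d a b powr \<beta>"
      by simp
  qed
qed

lemma Pk_tendsto: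
  fixes \<psi> :: "(int \<Rightarrow> real) \<Rightarrow> 'b::banach"
  assumes "bounded_by M \<psi>" "hoelder_by H \<psi>" "u \<in> Om"
  shows "(\<lambda>k. Pk Z f p k \<psi> u) \<longlonglongrightarrow> Pop Z f p \<psi> u"
  using Pk_tendsto_Pop[OF hoelder_by_scaleR[OF exp_f_bounds assms(1,2)] assms(3)] .

text \<open>h is bounded away from zero: compare with its value at one fixed point.\<close>
lemma h_lower_bound: obtains c where "0 < c" "\<forall>x\<in>Om. c \<le> h x"
proof
  let ?x0 = "\<lambda>_::int. 0::real"
  show "0 < h ?x0 / exp (Kh * B powr \<beta>)" using h_pos zero_in_Om by simp
  show "\<forall>x\<in>Om. h ?x0 / exp (Kh * B powr \<beta>) \<le> h x"
  proof
    fix x assume x: "x \<in> Om"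
    have "h ?x0 \<le> exp (Kh * d ?x0 x powr \<beta>) * h x" using h_log_hoelder zero_in_Om x by blast
    also have "\<dots> \<le> exp (Kh * B powr \<beta>) * h x"
      using d_powr_le_B[OF zero_in_Om x] Kh_nonneg h_pos x
      by (intro mult_right_mono) (auto intro: mult_left_mono less_imp_le)
    finally show "h ?x0 / exp (Kh * B powr \<beta>) \<le> h x" by (simp add: divide_le_eq mult.commute)
  qed
qed

definition weight :: "nat \<Rightarrow> (int \<Rightarrow> real \<Rightarrow> real) \<Rightarrow> (int \<Rightarrow> real) \<Rightarrow> real" where
  "weight k \<sigma> u = exp (f (pzx p k \<sigma> u)) * h (pzx p k \<sigma> u)"

lemma weight_pos: "\<sigma> \<in> branches Z k \<Longrightarrow> u \<in> Om \<Longrightarrow> 0 < weight k \<sigma> u"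
  unfolding weight_def using h_pos pzx_Om by simp

lemma Pk_h_eq: "Pk Z f p k h u = (1 / real (card Z ^ (2*k+1))) * (\<Sum>\<sigma>\<in>branches Z k. weight k \<sigma> u)"
  unfolding Pk_def weight_def by simp

lemma lam_h_pos: assumes u: "u \<in> Om"
  shows "(\<lambda>k. Pk Z f p k h u) \<longlonglongrightarrow> lam * h u" "0 < lam * h u"
proof -
  show lim: "(\<lambda>k. Pk Z f p k h u) \<longlonglongrightarrow> lam * h u"
    using Pk_tendsto[OF h_bounds u] h_eigen u by simp
  obtain c where c: "0 < c" "\<forall>x\<in>Om. c \<le> h x" by (rule h_lower_bound)
  have "exp (- Fm) * c \<le> Pk Z f p k h u" for k
  proof -
    have "weight k \<sigma> u \<ge> exp (- Fm) * c" if s: "\<sigma> \<in> branches Z k" for \<sigma>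
    proof -
      have a: "pzx p k \<sigma> u \<in> Om" using pzx_Om[OF s _ u] by simp
      have "- Fm \<le> f (pzx p k \<sigma> u)" using f_bounds(1) a unfolding bounded_by_def by (auto simp: abs_le_iff)
      thus ?thesis using c a unfolding weight_def by (intro mult_mono) auto
    qed
    hence "real (card Z ^ (2*k+1)) * (exp (- Fm) * c) \<le> (\<Sum>\<sigma>\<in>branches Z k. weight k \<sigma> u)"
      using sum_mono[of "branches Z k" "\<lambda>_. exp (- Fm) * c"] by (simp add: card_branches)
    thus ?thesis unfolding Pk_h_eq using card_Z_pos by (simp add: field_simps)
  qed
  hence "exp (- Fm) * c \<le> lam * h u" by (intro LIMSEQ_le_const[OF lim]) auto
  thus "0 < lam * h u" using c by (meson exp_gt_zero mult_pos_pos order_less_le_trans)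
qed

lemma weight_ratio:
  assumes a: "a1 \<in> Om" "a2 \<in> Om" "pik p k a1 = a1" "pik p k a2 = a2" and Y: "d a1 a2 \<le> Y"
  shows "exp (f a1) * h a1 \<le> exp ((Hf + Kh) * Y powr \<beta>) * (exp (f a2) * h a2)"
proof -
  have X: "d a1 a2 powr \<beta> \<le> Y powr \<beta>" using Y d_nonneg[OF a(1,2)] beta_pos by (intro powr_mono2) auto
  have "f a1 - f a2 \<le> Hf * d a1 a2 powr \<beta>"
    using f_bounds(2) a unfolding hoelder_by_def by (metis abs_le_iff real_norm_def)
  also have "\<dots> \<le> Hf * Y powr \<beta>" using X hoelder_by_nonneg[OF f_bounds(2)] by (intro mult_left_mono)
  finally have fa: "exp (f a1) \<le> exp (Hf * Y powr \<beta>) * exp (f a2)" by (simp add: exp_add[symmetric])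
  have "h a1 \<le> exp (Kh * d a1 a2 powr \<beta>) * h a2" using h_log_hoelder a by blast
  also have "\<dots> \<le> exp (Kh * Y powr \<beta>) * h a2"
    using X Kh_nonneg h_pos a by (intro mult_right_mono) (auto intro: mult_left_mono less_imp_le)
  finally have ha: "h a1 \<le> exp (Kh * Y powr \<beta>) * h a2" .
  have "exp (f a1) * h a1 \<le> (exp (Hf * Y powr \<beta>) * exp (f a2)) * (exp (Kh * Y powr \<beta>) * h a2)"
    using fa ha h_pos a by (intro mult_mono) auto
  also have "\<dots> = exp ((Hf + Kh) * Y powr \<beta>) * (exp (f a2) * h a2)"
    by (simp add: distrib_right exp_add)
  finally show ?thesis .
qed

definition Lk :: "nat \<Rightarrow> ((int \<Rightarrow> real) \<Rightarrow> 'b::real_normed_vector) \<Rightarrow> (int \<Rightarrow> real) \<Rightarrow> 'b" where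
  "Lk k \<Phi> u = (1 / Pk Z f p k h u) *\<^sub>R Pk Z f p k (\<lambda>y. h y *\<^sub>R \<Phi> y) u"

lemma Lk_tendsto_Lop:
  fixes \<Phi> :: "(int \<Rightarrow> real) \<Rightarrow> 'b::banach"
  assumes "bounded_by M \<Phi>" "hoelder_by H \<Phi>" "u \<in> Om"
  shows "(\<lambda>k. Lk k \<Phi> u) \<longlonglongrightarrow> Lop Z f p lam h \<Phi> u"
proof -
  have "(\<lambda>k. Pk Z f p k (\<lambda>y. h y *\<^sub>R \<Phi> y) u) \<longlonglongrightarrow> Pop Z f p (\<lambda>y. h y *\<^sub>R \<Phi> y) u"
    using Pk_tendsto[OF bounded_by_scaleR hoelder_by_scaleR] h_bounds assms by blast
  moreover have "(\<lambda>k. 1 / Pk Z f p k h u) \<longlonglongrightarrow> 1 / (lam * h u)"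
    using lam_h_pos[OF assms(3)] by (intro tendsto_divide tendsto_const) auto
  ultimately show ?thesis unfolding Lk_def Lop_def by (rule tendsto_scaleR[rotated])
qed

lemma Lk_average:
  "Lk k \<Phi> u = (1 / (\<Sum>\<sigma>\<in>branches Z k. weight k \<sigma> u)) *\<^sub>R
      (\<Sum>\<sigma>\<in>branches Z k. weight k \<sigma> u *\<^sub>R \<Phi> (pzx p k \<sigma> u))"
proof -
  let ?n = "real (card Z ^ (2*k+1))"
  have "Pk Z f p k (\<lambda>y. h y *\<^sub>R \<Phi> y) u
     = (1 / ?n) *\<^sub>R (\<Sum>\<sigma>\<in>branches Z k. weight k \<sigma> u *\<^sub>R \<Phi> (pzx p k \<sigma> u))"
    unfolding Pk_def weight_def by simp
  moreover have "?n \<noteq> 0" using card_Z_pos by simp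
  ultimately show ?thesis
    unfolding Lk_def Pk_h_eq by (cases "(\<Sum>\<sigma>\<in>branches Z k. weight k \<sigma> u) = 0") simp_all
qed

lemma Lk_bounded:
  assumes M: "bounded_by M \<Phi>" and u: "u \<in> Om"
  shows "norm (Lk k \<Phi> u) \<le> M"
proof -
  let ?A = "branches Z k"
  have S: "0 < sum (\<lambda>\<sigma>. weight k \<sigma> u) ?A"
    using weight_pos u branches_nonempty branches_finite by (metis all_not_in_conv sum_pos)
  have "norm (\<Sum>\<sigma>\<in>?A. weight k \<sigma> u *\<^sub>R \<Phi> (pzx p k \<sigma> u)) \<le> (\<Sum>\<sigma>\<in>?A. weight k \<sigma> u * M)"
  proof (rule order.trans[OF norm_sum sum_mono])
    fix \<sigma> assume s: "\<sigma> \<in> ?A"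
    show "norm (weight k \<sigma> u *\<^sub>R \<Phi> (pzx p k \<sigma> u)) \<le> weight k \<sigma> u * M"
      using weight_pos[OF s u] M pzx_Om[OF s _ u] unfolding bounded_by_def by (simp add: mult_left_mono)
  qed
  also have "\<dots> = sum (\<lambda>\<sigma>. weight k \<sigma> u) ?A * M" by (simp add: sum_distrib_right)
  finally show ?thesis unfolding Lk_average using S by (simp add: field_simps)
qed

definition CL :: real where
  "CL = 4 * (Hf + Kh) * \<eta> powr \<beta> * exp (2 * ((Hf + Kh) * \<eta> powr \<beta> * B powr \<beta>))"

lemma CL_nonneg: "0 \<le> CL"
  unfolding CL_def using hoelder_by_nonneg[OF f_bounds(2)] Kh_nonneg by simp

lemma weight_distortion_le:
  assumes u: "u \<in> Om" and v: "v \<in> Om" and M: "0 \<le> M"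
  shows "2 * M * (exp (2 * ((Hf + Kh) * (\<eta> * d u v) powr \<beta>)) - 1) \<le> CL * M * d u v powr \<beta>"
proof -
  let ?K = "Hf + Kh"
  let ?Q = "?K * \<eta> powr \<beta> * d u v powr \<beta>"
  have K: "0 \<le> ?K" using hoelder_by_nonneg[OF f_bounds(2)] Kh_nonneg by simp
  have Q: "0 \<le> ?Q" using K by simp
  have "?Q \<le> ?K * \<eta> powr \<beta> * B powr \<beta>"
    using d_powr_le_B[OF u v] K by (simp add: mult_left_mono)
  hence "exp (2 * ?Q) - 1 \<le> exp (2 * (?K * \<eta> powr \<beta> * B powr \<beta>)) * (2 * ?Q)"
    using exp_lipschitz[of "2 * ?Q" "2 * (?K * \<eta> powr \<beta> * B powr \<beta>)" 0] Q by simp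
  hence "2 * M * (exp (2 * ?Q) - 1) \<le> 2 * M * (exp (2 * (?K * \<eta> powr \<beta> * B powr \<beta>)) * (2 * ?Q))"
    using M by (intro mult_left_mono) auto
  also have "\<dots> = CL * M * d u v powr \<beta>" unfolding CL_def by (simp add: algebra_simps)
  finally show ?thesis using eta_pos d_nonneg[OF u v] by (simp add: powr_mult mult.assoc)
qed

text \<open>One step of L_k contracts the Hoelder constant by eta^beta, up to a loss CL |Phi|_infty:
  the preimages of u and v are eta d(u,v)-close and their weights are comparable.\<close>
lemma Lk_hoelder:
  assumes M: "bounded_by M \<Phi>" and H: "hoelder_by H \<Phi>" and u: "u \<in> Om" and v: "v \<in> Om"
  shows "norm (Lk k \<Phi> u - Lk k \<Phi> v) \<le> (\<eta> powr \<beta> * H + CL * M) * d u v powr \<beta>"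
proof -
  let ?A = "branches Z k" and ?a = "\<lambda>\<sigma> x. pzx p k \<sigma> x"
  let ?Y = "\<eta> * d u v"
  let ?Q = "(Hf + Kh) * ?Y powr \<beta>"
  have aOm: "\<And>\<sigma> x. \<sigma> \<in> ?A \<Longrightarrow> x \<in> Om \<Longrightarrow> ?a \<sigma> x \<in> Om" using pzx_Om by auto
  have apik: "\<And>\<sigma> x. pik p k (?a \<sigma> x) = ?a \<sigma> x" using pik_pzx by auto
  have dY: "d (?a \<sigma> u) (?a \<sigma> v) \<le> ?Y" "d (?a \<sigma> v) (?a \<sigma> u) \<le> ?Y" if "\<sigma> \<in> ?A" for \<sigma>
    using d_pzx_le[OF that u v] d_pzx_le[OF that v u] d_sym[OF u v] by auto
  have "norm (Lk k \<Phi> u - Lk k \<Phi> v) \<le> H * ?Y powr \<beta> + 2 * M * (exp (2 * ?Q) - 1)"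
    unfolding Lk_average
  proof (rule weighted_average_diff[OF branches_finite branches_nonempty])
    fix \<sigma> assume s: "\<sigma> \<in> ?A"
    show "0 < weight k \<sigma> u" "0 < weight k \<sigma> v" using weight_pos[OF s] u v by auto
    show "weight k \<sigma> u \<le> exp ?Q * weight k \<sigma> v" "weight k \<sigma> v \<le> exp ?Q * weight k \<sigma> u"
      unfolding weight_def using weight_ratio aOm[OF s] u v apik dY[OF s] by blast+
    show "norm (\<Phi> (?a \<sigma> v)) \<le> M" using M aOm[OF s v] unfolding bounded_by_def by blast
    have "norm (\<Phi> (?a \<sigma> u) - \<Phi> (?a \<sigma> v)) \<le> H * d (?a \<sigma> u) (?a \<sigma> v) powr \<beta>"
      using H aOm[OF s u] aOm[OF s v] apik unfolding hoelder_by_def by metis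
    also have "\<dots> \<le> H * ?Y powr \<beta>"
      using dY(1)[OF s] d_nonneg[OF aOm[OF s u] aOm[OF s v]] beta_pos hoelder_by_nonneg[OF H]
      by (intro mult_left_mono powr_mono2) auto
    finally show "norm (\<Phi> (?a \<sigma> u) - \<Phi> (?a \<sigma> v)) \<le> H * ?Y powr \<beta>" .
  qed (use hoelder_by_nonneg[OF f_bounds(2)] Kh_nonneg in simp)
  also have "\<dots> \<le> (\<eta> powr \<beta> * H + CL * M) * d u v powr \<beta>"
    using weight_distortion_le[OF u v bounded_by_nonneg[OF M]] eta_pos d_nonneg[OF u v]
    by (simp add: powr_mult algebra_simps)
  finally show ?thesis .
qed

lemma Lop_step:
  fixes \<Phi> :: "(int \<Rightarrow> real) \<Rightarrow> 'b::banach"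
  assumes M: "bounded_by M \<Phi>" and H: "hoelder_by H \<Phi>"
  shows "bounded_by M (Lop Z f p lam h \<Phi>)"
    and "hoelder_by (\<eta> powr \<beta> * H + CL * M) (Lop Z f p lam h \<Phi>)"
proof -
  let ?L = "Lop Z f p lam h \<Phi>"
  show "bounded_by M ?L"
    unfolding bounded_by_def
  proof
    fix x assume x: "x \<in> Om"
    have "(\<lambda>k. norm (Lk k \<Phi> x)) \<longlonglongrightarrow> norm (?L x)"
      by (intro tendsto_norm Lk_tendsto_Lop[OF M H x])
    thus "norm (?L x) \<le> M" by (rule LIMSEQ_le_const2) (use Lk_bounded[OF M x] in auto)
  qed
  show "hoelder_by (\<eta> powr \<beta> * H + CL * M) ?L"
    unfolding hoelder_by_def
  proof (intro allI impI)
    fix j a b assume ab: "a \<in> Om" "b \<in> Om"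
    let ?u = "pik p j a" and ?v = "pik p j b"
    have uv: "?u \<in> Om" "?v \<in> Om" using pik_Om ab by auto
    have "(\<lambda>k. norm (Lk k \<Phi> ?u - Lk k \<Phi> ?v)) \<longlonglongrightarrow> norm (?L ?u - ?L ?v)"
      by (intro tendsto_norm tendsto_diff Lk_tendsto_Lop[OF M H] uv)
    hence "norm (?L ?u - ?L ?v) \<le> (\<eta> powr \<beta> * H + CL * M) * d ?u ?v powr \<beta>"
      by (rule LIMSEQ_le_const2) (use Lk_hoelder[OF M H uv] in auto)
    also have "\<dots> \<le> (\<eta> powr \<beta> * H + CL * M) * d a b powr \<beta>"
      using d_pik_le[OF ab] d_nonneg[OF uv] beta_pos hoelder_by_nonneg[OF H]
        bounded_by_nonneg[OF M] CL_nonneg eta_pos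
      by (intro mult_left_mono powr_mono2) auto
    finally show "norm (?L ?u - ?L ?v) \<le> (\<eta> powr \<beta> * H + CL * M) * d a b powr \<beta>" .
  qed
qed

lemma Lop_iterate:
  fixes \<Phi> :: "(int \<Rightarrow> real) \<Rightarrow> 'b::banach"
  assumes M: "bounded_by M \<Phi>" and H: "hoelder_by H \<Phi>"
    and C: "0 \<le> C" "\<eta> powr \<beta> * C + CL \<le> C"
  shows "bounded_by M ((Lop Z f p lam h ^^ n) \<Phi>) \<and>
    hoelder_by (\<eta> powr (\<beta> * real n) * H + C * M) ((Lop Z f p lam h ^^ n) \<Phi>)"
proof (induction n)
  case 0
  have "hoelder_by (H + C * M) \<Phi>"
    using H C bounded_by_nonneg[OF M] by (auto intro: hoelder_by_mono)
  thus ?case using M eta_pos by simp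
next
  case (Suc n)
  let ?H = "\<eta> powr (\<beta> * real n) * H + C * M"
  have step: "hoelder_by (\<eta> powr \<beta> * ?H + CL * M) ((Lop Z f p lam h ^^ Suc n) \<Phi>)"
    using Lop_step(2)[OF Suc[THEN conjunct1] Suc[THEN conjunct2]] by simp
  have "\<eta> powr \<beta> * ?H + CL * M = \<eta> powr (\<beta> * real (Suc n)) * H + (\<eta> powr \<beta> * C + CL) * M"
    by (simp add: powr_add[symmetric] algebra_simps)
  also have "\<dots> \<le> \<eta> powr (\<beta> * real (Suc n)) * H + C * M"
    using C bounded_by_nonneg[OF M] by (simp add: mult_right_mono)
  finally show ?case
    using Lop_step(1)[OF Suc[THEN conjunct1] Suc[THEN conjunct2]] hoelder_by_mono[OF step] by simp
qed

lemma absorbing_constant_exists: "\<exists>C>0. \<eta> powr \<beta> * C + CL \<le> C"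
proof -
  define C where "C = (CL + 1) / (1 - \<eta> powr \<beta>)"
  have q: "0 < \<eta> powr \<beta>" "\<eta> powr \<beta> < 1"
    using eta_pos eta_lt_1 beta_pos powr_less_mono2[of \<beta> \<eta> 1] by auto
  have "(1 - \<eta> powr \<beta>) * C = CL + 1" unfolding C_def using q by simp
  hence "\<eta> powr \<beta> * C + CL \<le> C" by (simp add: algebra_simps)
  moreover have "0 < C" unfolding C_def using q CL_nonneg by simp
  ultimately show ?thesis by blast
qed

lemma holder_Lop_iterate:
  fixes \<Phi> :: "(int \<Rightarrow> real) \<Rightarrow> 'b::banach"
  assumes \<Phi>: "inC dI \<theta> p \<beta> \<Phi>" and C: "0 \<le> C" "\<eta> powr \<beta> * C + CL \<le> C"
  shows "holder dI \<theta> p \<beta> ((Lop Z f p lam h ^^ n) \<Phi>)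
           \<le> holder dI \<theta> p \<beta> \<Phi> * ereal (\<eta> powr (\<beta> * real n)) + ereal C * supn \<Phi>"
proof -
  obtain M H where MH: "supn \<Phi> = ereal M" "holder dI \<theta> p \<beta> \<Phi> = ereal H"
    and bounds: "bounded_by M \<Phi>" "hoelder_by H \<Phi>"
    using inC_bounds[OF \<Phi>] by blast
  have "holder dI \<theta> p \<beta> ((Lop Z f p lam h ^^ n) \<Phi>) \<le> ereal (\<eta> powr (\<beta> * real n) * H + C * M)"
    using Lop_iterate[OF bounds C] holder_le by blast
  thus ?thesis unfolding MH by (simp add: mult.commute)
qed

end

text \<open>Only the hypotheses on d_I, the inverse branches, f and h enter.\<close>

theorem mainTheorem9:
  fixes dI :: "real \<Rightarrow> real \<Rightarrow> real"
    and \<theta> \<eta> \<beta> lam p :: real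
    and \<tau> :: "real \<Rightarrow> real"
    and Z :: "(real \<Rightarrow> real) set"
    and f h :: "(int \<Rightarrow> real) \<Rightarrow> real"
    and \<nu>0 :: "(int \<Rightarrow> real) measure"
  assumes dI_metric: "metric_on_I dI"
    and dI_bounded: "\<exists>B. \<forall>s\<in>Iv. \<forall>t\<in>Iv. dI s t \<le> B"
    and \<theta>: "0 < \<theta>" "\<theta> < 1"
    and tau: "full_branches \<tau> Z"
    and p: "p \<in> Iv" "\<tau> p = p"
    and \<eta>: "0 < \<eta>" "\<eta> < 1"
    and contr: "\<forall>\<zeta>\<in>Z. \<forall>s\<in>Iv. \<forall>t\<in>Iv. dI (\<zeta> s) (\<zeta> t) \<le> \<eta> * dI s t"
    and \<beta>: "0 < \<beta>" "\<beta> \<le> 1"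
    and f: "inC dI \<theta> p \<beta> f"
    and \<nu>0: "prob_space \<nu>0" "space \<nu>0 = Om" "sets \<nu>0 = borelOm dI \<theta>"
    and lam: "lam = integral\<^sup>L \<nu>0 (Pop Z f p (\<lambda>_. 1 :: real))"
    and dual: "\<forall>\<Psi> :: (int \<Rightarrow> real) \<Rightarrow> real. inC dI \<theta> p \<beta> \<Psi> \<longrightarrow>
                 integral\<^sup>L \<nu>0 (Pop Z f p \<Psi>) = lam * integral\<^sup>L \<nu>0 \<Psi>"
    and h: "inC dI \<theta> p \<beta> h" "\<forall>x\<in>Om. 0 < h x"
      "\<forall>x\<in>Om. Pop Z f p h x = lam * h x"
      "integral\<^sup>L \<nu>0 h = 1"
      "\<forall>x\<in>Om. \<forall>y\<in>Om. h x \<le> exp (real_of_ereal (holder dI \<theta> p \<beta> f) * (\<eta> powr \<beta> / (1 - \<eta> powr \<beta>))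
                                         * dOm dI \<theta> x y powr \<beta>) * h y"
  shows "\<exists>C5>0. \<forall>\<Phi> :: (int \<Rightarrow> real) \<Rightarrow> complex. inC dI \<theta> p \<beta> \<Phi> \<longrightarrow>
           (\<forall>n::nat. holder dI \<theta> p \<beta> ((Lop Z f p lam h ^^ n) \<Phi>)
              \<le> holder dI \<theta> p \<beta> \<Phi> * ereal (\<eta> powr (\<beta> * real n)) + ereal C5 * supn \<Phi>)"
proof -
  obtain B where B: "\<forall>s\<in>Iv. \<forall>t\<in>Iv. dI s t \<le> B" using dI_bounded by blast
  interpret shift_space dI \<theta> \<beta> p B
    using dI_metric B \<theta> \<beta> p by unfold_locales auto
  let ?Kh = "real_of_ereal (holder dI \<theta> p \<beta> f) * (\<eta> powr \<beta> / (1 - \<eta> powr \<beta>))"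
  have "0 \<le> ?Kh"
    using \<eta> \<beta> powr_less_mono2[of \<beta> \<eta> 1] real_of_ereal_pos[OF holder_nonneg[of f]] by simp
  moreover have "finite Z" "Z \<noteq> {}" "\<forall>\<zeta>\<in>Z. \<forall>t\<in>Iv. \<zeta> t \<in> Iv"
    using tau unfolding full_branches_def by auto
  ultimately interpret transfer_operator dI \<theta> \<beta> p B Z \<eta> f h lam ?Kh
    using contr \<eta> f h by unfold_locales auto
  obtain C where C: "0 < C" "\<eta> powr \<beta> * C + CL \<le> C" using absorbing_constant_exists by blast
  show ?thesis
    by (intro exI[of _ C] conjI allI impI holder_Lop_iterate) (use C in auto)
qed

end
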